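(* For every $n\ge 2$, $FlDr_n^{3M}=FlDr_n$. That is, a point $P\in \mathbb{TP}^{\binom n1-1}\times\cdots\times\mathbb{TP}^{\binom n{n-1}-1}$ is a solution of the tropicalization of every incidence-Plücker relation if and only if it is a solution of the tropicalization of every three-term incidence-Plücker relation and its support forms a flag matroid.
   Context: Let $[n]=\{1,\dots,n\}$; variables $P_I$ are indexed by subsets $I\subset[n]$ with $1\le|I|\le n-1$. Incidence-Plücker relations: for $1\le r\le s\le n$, $I\subset[n]$ with $|I|=r-1$ and $J\subset[n]$ with $|J|=s+1$, the incidence-Plücker relation is $\sum_{j\in J\setminus I}\mathrm{sign}(j,I,J)\,P_{I\cup\{j\}}P_{J\setminus\{j\}}$, where $\mathrm{sign}(j,I,J)=(-1)^{|\{k\in J:\,k<j\}|+|\{i\in I:\,j<i\}|}$. $\mathfrak P_{IP;n}$ is the set of all of them; $\mathfrak P^{3\text{ term}}_{IP;n}$ the set of those with exactly three terms (i.e. $|J\setminus I|=3$). Tropical notions: $\mathbb T=\mathbb R\cup\{\infty\}$; $\mathbb{TP}^{m-1}=(\mathbb T^m\setminus\{(\infty,\dots,\infty)\})/\sim$ with $x\sim y$ iff $x=y+(c,\dots,c)$, $c\in\mathbb R$; the $k$-th factor of the product has coordinates indexed by $k$-subsets of $[n]$. For a polynomial $p=\sum_b c_bx^b$ with real coefficients (distinct exponents $b$, all $c_b\neq0$), the value of the term $c_bx^b$ at $y$ is $b\cdot y$ (with $0\cdot\infty=0$); $y$ is a solution of the tropicalization of $p$ if the minimum term value is attained by at least two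 terms. $\overline{\mathrm{trop}}(\mathcal P)$ is the set of points solving the tropicalizations of all $p\in\mathcal P$. The complete flag Dressian is $FlDr_n=\overline{\mathrm{trop}}(\mathfrak P_{IP;n})$. The support of $P$ is $\{I:P_I\ne\infty\}$. A (complete) flag matroid on $[n]$ is a sequence $(\mathcal M_1,\dots,\mathcal M_{n-1})$ of matroids on $[n]$, $\mathrm{rank}\,\mathcal M_i=i$, such that for all $j<k$ every basis of $\mathcal M_j$ is contained in some basis of $\mathcal M_k$ and every basis of $\mathcal M_k$ contains some basis of $\mathcal M_j$; the support forms a flag matroid if its $k$-element members are the bases of $\mathcal M_k$ for such a flag matroid. $FlDr_n^{3M}$ is the set of points of $\overline{\mathrm{trop}}(\mathfrak P^{3\text{ term}}_{IP;n})$ whose support forms a flag matroid. *)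

theory Defs
  imports "HOL-Library.Extended_Real"
begin

text \<open>Tropical numbers T = R \<union> {\<infinity>} are modelled inside ereal: a coordinate is a real
  number or PInfty (the value MInfty is excluded).  A point of the product
  TP^(n choose 1 - 1) x ... x TP^(n choose n-1 - 1) is given by a representative
  P :: nat set \<Rightarrow> ereal, whose relevant coordinates are P I for I \<subseteq> {1..n},
  1 \<le> card I \<le> n-1.\<close>

definition in_TP_product :: "nat \<Rightarrow> (nat set \<Rightarrow> ereal) \<Rightarrow> bool" where
  "in_TP_product n P \<longleftrightarrow>
     (\<forall>I. I \<subseteq> {1..n} \<and> 1 \<le> card I \<and> card I \<le> n - 1 \<longrightarrow> P I \<noteq> -\<infinity>) \<and>
     (\<forall>k\<in>{1..n-1}. \<exists>I. I \<subseteq> {1..n} \<and> card I = k \<and> P I \<noteq> \<infinity>)"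

text \<open>Sign of a term of an incidence-Pluecker relation (only relevant for the
  polynomial itself; the tropicalization only uses that it is nonzero).\<close>
definition ip_sign :: "nat \<Rightarrow> nat set \<Rightarrow> nat set \<Rightarrow> int" where
  "ip_sign j I J = (-1) ^ (card {k\<in>J. k < j} + card {i\<in>I. j < i})"

definition ip_index :: "nat \<Rightarrow> nat set \<Rightarrow> nat set \<Rightarrow> bool" where
  "ip_index n I J \<longleftrightarrow> I \<subseteq> {1..n} \<and> J \<subseteq> {1..n} \<and>
     (\<exists>r s. 1 \<le> r \<and> r \<le> s \<and> s \<le> n \<and> card I = r - 1 \<and> card J = s + 1)"

text \<open>Value at P of the term sign(j,I,J) P_{I\<union>{j}} P_{J-{j}} (exponent vector dotted with P).\<close>
definition ip_term_val :: "(nat set \<Rightarrow> ereal) \<Rightarrow> nat set \<Rightarrow> nat set \<Rightarrow> nat \<Rightarrow> ereal" where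
  "ip_term_val P I J j = P (insert j I) + P (J - {j})"

definition trop_solves_ip :: "(nat set \<Rightarrow> ereal) \<Rightarrow> nat set \<Rightarrow> nat set \<Rightarrow> bool" where
  "trop_solves_ip P I J \<longleftrightarrow>
     (\<exists>j1\<in>J - I. \<exists>j2\<in>J - I. j1 \<noteq> j2 \<and>
        (\<forall>k\<in>J - I. ip_term_val P I J j1 \<le> ip_term_val P I J k \<and>
                    ip_term_val P I J j2 \<le> ip_term_val P I J k))"

definition matroid_bases :: "nat set \<Rightarrow> nat set set \<Rightarrow> bool" where
  "matroid_bases E B \<longleftrightarrow> finite E \<and> B \<noteq> {} \<and> (\<forall>X\<in>B. X \<subseteq> E) \<and>
     (\<forall>B1\<in>B. \<forall>B2\<in>B. \<forall>x\<in>B1 - B2. \<exists>y\<in>B2 - B1. insert y (B1 - {x}) \<in> B)"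

definition flag_matroid :: "nat \<Rightarrow> (nat \<Rightarrow> nat set set) \<Rightarrow> bool" where
  "flag_matroid n M \<longleftrightarrow>
     (\<forall>k\<in>{1..n-1}. matroid_bases {1..n} (M k) \<and> (\<forall>X\<in>M k. card X = k)) \<and>
     (\<forall>j k. 1 \<le> j \<and> j < k \<and> k \<le> n - 1 \<longrightarrow>
        (\<forall>X\<in>M j. \<exists>Y\<in>M k. X \<subseteq> Y) \<and> (\<forall>Y\<in>M k. \<exists>X\<in>M j. X \<subseteq> Y))"

definition support_forms_flag_matroid :: "nat \<Rightarrow> (nat set \<Rightarrow> ereal) \<Rightarrow> bool" where
  "support_forms_flag_matroid n P \<longleftrightarrow>
     flag_matroid n (\<lambda>k. {I. I \<subseteq> {1..n} \<and> card I = k \<and> P I \<noteq> \<infinity>})"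

definition FlDr :: "nat \<Rightarrow> (nat set \<Rightarrow> ereal) set" where
  "FlDr n = {P. in_TP_product n P \<and> (\<forall>I J. ip_index n I J \<longrightarrow> trop_solves_ip P I J)}"

definition FlDr_3M :: "nat \<Rightarrow> (nat set \<Rightarrow> ereal) set" where
  "FlDr_3M n = {P. in_TP_product n P \<and>
     (\<forall>I J. ip_index n I J \<and> card (J - I) = 3 \<longrightarrow> trop_solves_ip P I J) \<and>
     support_forms_flag_matroid n P}"

end

theory Submission
  imports Defs
begin

text \<open>
  For X = I \<union> {u} and Y = J - {u} with u \<in> J - I, the term of the incidence-Pluecker relation
  with data (I,J) indexed by u has value P(X) + P(Y), and the one indexed by v \<in> Y - X has value
  P(X - u + v) + P(Y - v + u).  So P solves the tropicalized relation if and only if every term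
  is matched by a different term of no larger value, i.e. iff the tropical exchange inequality
  P(X - u + v) + P(Y - v + u) \<le> P(X) + P(Y) holds for some v \<in> Y - X; the three-term relations
  are exactly the instances with |Y - X| = 2.  Exchange for all pairs makes the support a flag
  matroid by the usual exchange arguments.

  Conversely, exchange for (X,Y,u) is proved by induction on |Y - X|.  If it failed, pick
  Z(v) = (Y - v) \<union> Zs with Zs empty or a single element of X - Y - u, so that |Z(v)| \<ge> |X|,
  and some Z(v) in the support (this is where the flag matroid is used).  Exchange for
  (X, Z(v)) by induction, a three-term relation on Y \<union> {u}, and the failure of exchange for
  (X,Y) yield for every such v a v' with
  P(Z(v')) + P(X - u + v') < P(Z(v)) + P(X - u + v), an impossible infinite descent.
\<close>

definition trop_exchange :: "(nat set \<Rightarrow> ereal) \<Rightarrow> nat set \<Rightarrow> nat set \<Rightarrow> nat \<Rightarrow> bool" where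
  "trop_exchange f X Y u \<longleftrightarrow>
     (\<exists>v\<in>Y - X. f (insert v (X - {u})) + f (insert u (Y - {v})) \<le> f X + f Y)"

definition exchange_index :: "nat \<Rightarrow> nat set \<Rightarrow> nat set \<Rightarrow> nat \<Rightarrow> bool" where
  "exchange_index n X Y u \<longleftrightarrow> X \<subseteq> {1..n} \<and> Y \<subseteq> {1..n} \<and>
     1 \<le> card X \<and> card X \<le> card Y \<and> card Y \<le> n - 1 \<and> u \<in> X - Y"

lemma min_attained_twice_iff:
  fixes t :: "'a \<Rightarrow> 'b::linorder"
  assumes "finite S" "S \<noteq> {}"
  shows "(\<exists>j1\<in>S. \<exists>j2\<in>S. j1 \<noteq> j2 \<and> (\<forall>k\<in>S. t j1 \<le> t k \<and> t j2 \<le> t k)) \<longleftrightarrow>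
    (\<forall>x\<in>S. \<exists>v\<in>S. v \<noteq> x \<and> t v \<le> t x)"
proof
  assume "\<exists>j1\<in>S. \<exists>j2\<in>S. j1 \<noteq> j2 \<and> (\<forall>k\<in>S. t j1 \<le> t k \<and> t j2 \<le> t k)"
  then show "\<forall>x\<in>S. \<exists>v\<in>S. v \<noteq> x \<and> t v \<le> t x" by metis
next
  assume twice: "\<forall>x\<in>S. \<exists>v\<in>S. v \<noteq> x \<and> t v \<le> t x"
  define j where "j = arg_min_on t S"
  have j: "j \<in> S" "\<forall>k\<in>S. t j \<le> t k"
    using arg_min_if_finite[OF assms, of t] unfolding j_def by (auto simp: not_less)
  then obtain v where "v \<in> S" "v \<noteq> j" "t v \<le> t j" using twice by blast
  then show "\<exists>j1\<in>S. \<exists>j2\<in>S. j1 \<noteq> j2 \<and> (\<forall>k\<in>S. t j1 \<le> t k \<and> t j2 \<le> t k)"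
    using j by (meson order_trans)
qed

lemma trop_solves_ip_iff_trop_exchange:
  assumes "finite J" "J - I \<noteq> {}"
  shows "trop_solves_ip f I J \<longleftrightarrow> (\<forall>x\<in>J - I. trop_exchange f (insert x I) (J - {x}) x)"
proof -
  have "trop_exchange f (insert x I) (J - {x}) x \<longleftrightarrow>
      (\<exists>v\<in>J - I. v \<noteq> x \<and> ip_term_val f I J v \<le> ip_term_val f I J x)" if "x \<in> J - I" for x
  proof -
    have "J - {x} - insert x I = J - I - {x}" by blast
    moreover have "insert v (insert x I - {x}) = insert v I" "insert x (J - {x} - {v}) = J - {v}"
      if "v \<in> J - I" "v \<noteq> x" for v
      using \<open>x \<in> J - I\<close> that by auto
    ultimately show ?thesis
      using that unfolding trop_exchange_def ip_term_val_def by (auto simp: insert_absorb)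
  qed
  then show ?thesis
    unfolding trop_solves_ip_def using min_attained_twice_iff[OF _ assms(2)] assms(1) by simp
qed

lemma ip_index_imp_exchange_index:
  assumes "ip_index n I J" "x \<in> J - I"
  shows "exchange_index n (insert x I) (J - {x}) x"
proof -
  obtain r s where rs: "I \<subseteq> {1..n}" "J \<subseteq> {1..n}" "1 \<le> r" "r \<le> s" "s \<le> n"
    "card I = r - 1" "card J = s + 1"
    using assms(1) unfolding ip_index_def by blast
  have "finite I" "finite J" using rs(1,2) finite_subset by blast+
  moreover have "card J \<le> n" using card_mono[OF _ rs(2)] by simp
  ultimately show ?thesis
    unfolding exchange_index_def using rs assms(2) by auto
qed

lemma exchange_index_imp_ip_index:
  assumes "exchange_index n X Y u"
  shows "ip_index n (X - {u}) (insert u Y)"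
proof -
  have "finite X" "finite Y"
    using assms finite_subset unfolding exchange_index_def by blast+
  then show ?thesis
    using assms unfolding ip_index_def exchange_index_def
    by (intro conjI exI[of _ "card X"] exI[of _ "card Y"]) auto
qed

lemma trop_solves_ip_all_iff_trop_exchange_all:
  "(\<forall>I J. ip_index n I J \<and> card (J - I) \<in> E \<longrightarrow> trop_solves_ip f I J) \<longleftrightarrow>
   (\<forall>X Y u. exchange_index n X Y u \<and> Suc (card (Y - X)) \<in> E \<longrightarrow> trop_exchange f X Y u)"
proof (intro iffI allI impI; elim conjE)
  fix X Y u
  assume ip: "\<forall>I J. ip_index n I J \<and> card (J - I) \<in> E \<longrightarrow> trop_solves_ip f I J"
    and ex: "exchange_index n X Y u" and E: "Suc (card (Y - X)) \<in> E"
  have u: "u \<in> X" "u \<notin> Y" and "finite Y"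
    using ex finite_subset unfolding exchange_index_def by auto
  then have JI: "insert u Y - (X - {u}) = insert u (Y - X)" and "card (insert u (Y - X)) \<in> E"
    using E by auto
  then have "trop_solves_ip f (X - {u}) (insert u Y)"
    using ip exchange_index_imp_ip_index[OF ex] by simp
  then have "trop_exchange f (insert u (X - {u})) (insert u Y - {u}) u"
    using trop_solves_ip_iff_trop_exchange \<open>finite Y\<close> JI by simp
  then show "trop_exchange f X Y u" using u by (simp add: insert_absorb)
next
  fix I J
  assume ex: "\<forall>X Y u. exchange_index n X Y u \<and> Suc (card (Y - X)) \<in> E \<longrightarrow> trop_exchange f X Y u"
    and ip: "ip_index n I J" and E: "card (J - I) \<in> E"
  obtain r s where rs: "I \<subseteq> {1..n}" "J \<subseteq> {1..n}" "1 \<le> r" "r \<le> s"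
    "card I = r - 1" "card J = s + 1"
    using ip unfolding ip_index_def by blast
  have "finite J" using rs(2) finite_subset by blast
  moreover have "\<not> J \<subseteq> I" using rs card_mono[of I J] finite_subset[OF rs(1)] by auto
  moreover have "trop_exchange f (insert x I) (J - {x}) x" if x: "x \<in> J - I" for x
  proof -
    have "J - {x} - insert x I = J - I - {x}" by blast
    then have "Suc (card (J - {x} - insert x I)) = card (J - I)"
      using card_Suc_Diff1[of "J - I" x] x \<open>finite J\<close> by simp
    then show ?thesis using ex E ip_index_imp_exchange_index[OF ip x] by simp
  qed
  ultimately show "trop_solves_ip f I J" using trop_solves_ip_iff_trop_exchange by blast
qed

lemma card_Diff_le_card_Diff:
  assumes "finite X" "finite Y" "card X \<le> card Y"
  shows "card (X - Y) \<le> card (Y - X)"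
  using assms card_Int_Diff[of X Y] card_Int_Diff[of Y X] by (simp add: Int_commute)

lemma card_Diff_eq_card_Diff:
  assumes "finite X" "finite Y" "card X = card Y"
  shows "card (X - Y) = card (Y - X)"
  using assms card_Diff_le_card_Diff[of X Y] card_Diff_le_card_Diff[of Y X] by simp

lemma card_insert_Diff_swap:
  "finite A \<Longrightarrow> v \<in> A \<Longrightarrow> x \<notin> A \<Longrightarrow> card (insert x (A - {v})) = card A"
  by (metis Diff_iff card.insert card_Suc_Diff1 finite_Diff)

lemma matroid_bases_exchange_into:
  assumes B: "matroid_bases E B" "\<forall>X\<in>B. card X = k"
  shows "X \<in> B \<Longrightarrow> Y \<in> B \<Longrightarrow> z \<in> X - Y \<Longrightarrow> \<exists>v\<in>Y - X. insert z (Y - {v}) \<in> B"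
proof (induction "card (X - Y)" arbitrary: X rule: less_induct)
  case less
  have fin: "finite X" "finite Y"
    using B less.prems finite_subset unfolding matroid_bases_def by blast+
  show ?case
  proof (cases "X - Y = {z}")
    case True
    then have "card (Y - X) = 1"
      using card_Diff_eq_card_Diff[OF fin] B(2) less.prems by simp
    then obtain v where "Y - X = {v}" by (meson card_1_singletonE)
    then have "insert z (Y - {v}) = X" using True less.prems by blast
    then show ?thesis using \<open>Y - X = {v}\<close> less.prems by auto
  next
    case False
    then obtain x where x: "x \<in> X - Y" "x \<noteq> z" using less.prems by blast
    then obtain y where y: "y \<in> Y - X" "insert y (X - {x}) \<in> B"
      using B(1) less.prems unfolding matroid_bases_def by blast
    have "insert y (X - {x}) - Y = (X - Y) - {x}" using y by auto
    then have "card (insert y (X - {x}) - Y) < card (X - Y)"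
      using x fin card_Diff1_less[of "X - Y" x] by simp
    moreover have "z \<in> insert y (X - {x}) - Y" using less.prems x by auto
    ultimately obtain v where "v \<in> Y - insert y (X - {x})" "insert z (Y - {v}) \<in> B"
      using less.hyps y(2) less.prems(2) by blast
    then show ?thesis using x by auto
  qed
qed

lemma matroid_bases_Int_subset_basis:
  assumes B: "matroid_bases E B" "\<forall>X\<in>B. card X = k" and A: "A \<in> B"
  shows "W \<in> B \<Longrightarrow> W \<subseteq> Y \<Longrightarrow> \<exists>W'\<in>B. A \<inter> Y \<subseteq> W' \<and> W' \<subseteq> Y"
proof (induction "card (A \<inter> Y - W)" arbitrary: W rule: less_induct)
  case less
  show ?case
  proof (cases "A \<inter> Y \<subseteq> W")
    case True
    then show ?thesis using less.prems by blast
  next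
    case False
    then obtain a where a: "a \<in> A \<inter> Y" "a \<notin> W" by blast
    then obtain v where v: "v \<in> W - A" "insert a (W - {v}) \<in> B"
      using matroid_bases_exchange_into[OF B A less.prems(1)] by blast
    have "finite A" using A B(1) unfolding matroid_bases_def by (meson finite_subset)
    moreover have "A \<inter> Y - insert a (W - {v}) = (A \<inter> Y - W) - {a}" using v by auto
    ultimately have "card (A \<inter> Y - insert a (W - {v})) < card (A \<inter> Y - W)"
      using a card_Diff1_less[of "A \<inter> Y - W" a] by simp
    moreover have "insert a (W - {v}) \<subseteq> Y" using less.prems a by auto
    ultimately show ?thesis using less.hyps[OF _ v(2)] by blast
  qed
qed

lemma flag_matroid_basis_between:
  assumes M: "flag_matroid n M" and jk: "1 \<le> j" "j < k" "k \<le> n - 1"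
    and X: "X \<in> M j" and Y: "Y \<in> M k"
  shows "\<exists>W\<in>M (k - 1). X \<inter> Y \<subseteq> W \<and> W \<subseteq> Y"
proof -
  have "k - 1 \<in> {1..n - 1}" using jk by auto
  then have B: "matroid_bases {1..n} (M (k - 1))" "\<forall>X\<in>M (k - 1). card X = k - 1"
    using M unfolding flag_matroid_def by blast+
  have concordant: "\<And>a b. 1 \<le> a \<Longrightarrow> a < b \<Longrightarrow> b \<le> n - 1 \<Longrightarrow>
      (\<forall>X\<in>M a. \<exists>Y\<in>M b. X \<subseteq> Y) \<and> (\<forall>Y\<in>M b. \<exists>X\<in>M a. X \<subseteq> Y)"
    using M unfolding flag_matroid_def by blast
  obtain A where A: "A \<in> M (k - 1)" "X \<subseteq> A"
  proof (cases "j < k - 1")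
    case True
    moreover have "k - 1 \<le> n - 1" using jk by linarith
    ultimately show ?thesis using concordant[of j "k - 1"] jk(1) X that by blast
  next
    case False
    then have "j = k - 1" using jk by linarith
    then show ?thesis using X that by blast
  qed
  have "1 \<le> k - 1" "k - 1 < k" using jk by linarith+
  then obtain W where "W \<in> M (k - 1)" "W \<subseteq> Y"
    using concordant[of "k - 1" k] jk(3) Y by blast
  then obtain W' where "W' \<in> M (k - 1)" "A \<inter> Y \<subseteq> W'" "W' \<subseteq> Y"
    using matroid_bases_Int_subset_basis[OF B A(1)] by blast
  then show ?thesis using A(2) by blast
qed

lemma flag_matroid_descent_start:
  assumes M: "flag_matroid n M" and X: "X \<in> M j" and Y: "Y \<in> M k"
    and jk: "1 \<le> j" "j \<le> k" "k \<le> n - 1"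
    and u: "u \<in> X - Y" and d: "2 \<le> card (Y - X)"
  obtains Zs v0 m where "Zs \<subseteq> X - Y - {u}" "card Zs \<le> 1" "card X + 1 \<le> card Y + card Zs"
    "v0 \<in> Y - X" "(Y - {v0}) \<union> Zs \<in> M m"
proof -
  have B: "matroid_bases {1..n} (M i)" "\<forall>X\<in>M i. card X = i" if "1 \<le> i" "i \<le> n - 1" for i
    using M that unfolding flag_matroid_def by auto
  have card: "card X = j" "card Y = k" using B X Y jk by auto
  have fin: "finite X" "finite Y"
    using B[of j] B[of k] X Y jk unfolding matroid_bases_def by (meson finite_subset order_trans)+
  show thesis
  proof (cases "j = k")
    case True
    then have "card (X - Y) \<ge> 2" using card_Diff_eq_card_Diff[OF fin] card d by simp
    moreover have "card (X - Y) \<le> 1" if "X - Y \<subseteq> {u}"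
      using card_mono[OF _ that] by simp
    ultimately obtain z where z: "z \<in> X - Y" "z \<noteq> u" by force
    then obtain v0 where "v0 \<in> Y - X" "insert z (Y - {v0}) \<in> M k"
      using matroid_bases_exchange_into[OF B[of k] _ _ z(1)] X Y True jk by auto
    then show thesis using that[of "{z}" v0 k] z card True by auto
  next
    case False
    then obtain W where W: "W \<in> M (k - 1)" "X \<inter> Y \<subseteq> W" "W \<subseteq> Y"
      using flag_matroid_basis_between[OF M jk(1) _ jk(3) X Y] jk(2) by auto
    have "card W = k - 1" using B[of "k - 1"] W(1) jk False by auto
    then have "card (Y - W) = 1" using W(3) fin card False jk by (simp add: card_Diff_subset finite_subset)
    then obtain v0 where "Y - W = {v0}" by (meson card_1_singletonE)
    then have "W = Y - {v0}" "v0 \<in> Y - X" using W by auto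
    then show thesis using that[of "{}" v0 "k - 1"] W(1) card False jk by auto
  qed
qed

definition support_bases :: "nat \<Rightarrow> (nat set \<Rightarrow> ereal) \<Rightarrow> nat \<Rightarrow> nat set set" where
  "support_bases n P k = {I. I \<subseteq> {1..n} \<and> card I = k \<and> P I \<noteq> \<infinity>}"

lemma support_forms_flag_matroid_iff:
  "support_forms_flag_matroid n P \<longleftrightarrow> flag_matroid n (support_bases n P)"
  unfolding support_forms_flag_matroid_def support_bases_def ..

lemma ereal_add_le_not_PInfty:
  fixes a b c :: ereal
  assumes "a + b \<le> c" "c \<noteq> \<infinity>"
  shows "a \<noteq> \<infinity>" "b \<noteq> \<infinity>"
  using assms by auto

lemma trop_exchange_finite_swap:
  assumes "trop_exchange f X Y x" "f X \<noteq> \<infinity>" "f Y \<noteq> \<infinity>"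
  shows "\<exists>v\<in>Y - X. f (insert v (X - {x})) \<noteq> \<infinity> \<and> f (insert x (Y - {v})) \<noteq> \<infinity>"
proof -
  obtain v where "v \<in> Y - X" "f (insert v (X - {x})) + f (insert x (Y - {v})) \<le> f X + f Y"
    using assms(1) unfolding trop_exchange_def by blast
  moreover have "f X + f Y \<noteq> \<infinity>" using assms(2,3) by simp
  ultimately show ?thesis using ereal_add_le_not_PInfty by blast
qed

lemma support_bases_exchange:
  assumes ex: "\<And>X Y u. exchange_index n X Y u \<Longrightarrow> trop_exchange P X Y u"
    and jk: "1 \<le> j" "j \<le> k" "k \<le> n - 1"
    and X: "X \<in> support_bases n P j" and Y: "Y \<in> support_bases n P k" and x: "x \<in> X - Y"
  shows "\<exists>v\<in>Y - X. insert v (X - {x}) \<in> support_bases n P j \<and>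
    insert x (Y - {v}) \<in> support_bases n P k"
proof -
  have XY: "X \<subseteq> {1..n}" "card X = j" "P X \<noteq> \<infinity>" "Y \<subseteq> {1..n}" "card Y = k" "P Y \<noteq> \<infinity>"
    using X Y unfolding support_bases_def by auto
  then have "finite X" "finite Y" by (meson finite_atLeastAtMost finite_subset)+
  have "exchange_index n X Y x" using jk XY x unfolding exchange_index_def by auto
  then obtain v where v: "v \<in> Y - X"
    "P (insert v (X - {x})) \<noteq> \<infinity>" "P (insert x (Y - {v})) \<noteq> \<infinity>"
    using trop_exchange_finite_swap[OF ex] XY by blast
  moreover have "card (insert v (X - {x})) = j" "card (insert x (Y - {v})) = k"
    using card_insert_Diff_swap[of X x v] card_insert_Diff_swap[of Y v x] v(1) x XY
      \<open>finite X\<close> \<open>finite Y\<close> by auto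
  ultimately show ?thesis
    using XY x unfolding support_bases_def by (intro bexI[of _ v]) auto
qed

lemma exists_superset_by_exchange:
  assumes ex: "\<And>X Y x. X \<in> A \<Longrightarrow> Y \<in> B \<Longrightarrow> x \<in> X - Y \<Longrightarrow> \<exists>v\<in>Y - X. insert x (Y - {v}) \<in> B"
    and X: "X \<in> A" "finite X"
  shows "Y \<in> B \<Longrightarrow> \<exists>Y'\<in>B. X \<subseteq> Y'"
proof (induction "card (X - Y)" arbitrary: Y rule: less_induct)
  case less
  show ?case
  proof (cases "X \<subseteq> Y")
    case False
    then obtain x where x: "x \<in> X - Y" by blast
    then obtain v where v: "v \<in> Y - X" "insert x (Y - {v}) \<in> B" using ex X(1) less.prems by blast
    have "X - insert x (Y - {v}) = (X - Y) - {x}" using v by auto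
    then have "card (X - insert x (Y - {v})) < card (X - Y)"
      using x X(2) card_Diff1_less[of "X - Y" x] by simp
    then show ?thesis using less.hyps v(2) by blast
  qed (use less.prems in blast)
qed

lemma exists_subset_by_exchange:
  assumes ex: "\<And>X Y x. X \<in> A \<Longrightarrow> Y \<in> B \<Longrightarrow> x \<in> X - Y \<Longrightarrow> \<exists>v\<in>Y - X. insert v (X - {x}) \<in> A"
    and fin: "\<And>X. X \<in> A \<Longrightarrow> finite X" and Y: "Y \<in> B"
  shows "X \<in> A \<Longrightarrow> \<exists>X'\<in>A. X' \<subseteq> Y"
proof (induction "card (X - Y)" arbitrary: X rule: less_induct)
  case less
  show ?case
  proof (cases "X \<subseteq> Y")
    case False
    then obtain x where x: "x \<in> X - Y" by blast
    then obtain v where v: "v \<in> Y - X" "insert v (X - {x}) \<in> A" using ex Y less.prems by blast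
    have "insert v (X - {x}) - Y = (X - Y) - {x}" using v by auto
    then have "card (insert v (X - {x}) - Y) < card (X - Y)"
      using x fin[OF less.prems] card_Diff1_less[of "X - Y" x] by simp
    then show ?thesis using less.hyps v(2) by blast
  qed (use less.prems in blast)
qed

lemma support_forms_flag_matroid_of_trop_exchange:
  assumes tp: "in_TP_product n P"
    and ex: "\<And>X Y u. exchange_index n X Y u \<Longrightarrow> trop_exchange P X Y u"
  shows "support_forms_flag_matroid n P"
proof -
  let ?M = "support_bases n P"
  have fin: "finite X" if "X \<in> ?M k" for X k
    using that finite_subset[of X "{1..n}"] unfolding support_bases_def by auto
  have ne: "?M k \<noteq> {}" if "1 \<le> k" "k \<le> n - 1" for k
    using tp that unfolding in_TP_product_def support_bases_def by auto
  have "matroid_bases {1..n} (?M k)" if "1 \<le> k" "k \<le> n - 1" for k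
  proof -
    have "\<forall>X\<in>?M k. X \<subseteq> {1..n}" unfolding support_bases_def by blast
    then show ?thesis
      using support_bases_exchange[OF ex that(1) order_refl that(2)] ne[OF that]
      unfolding matroid_bases_def by blast
  qed
  moreover have "(\<forall>X\<in>?M j. \<exists>Y\<in>?M k. X \<subseteq> Y) \<and> (\<forall>Y\<in>?M k. \<exists>X\<in>?M j. X \<subseteq> Y)"
    if jk: "1 \<le> j" "j < k" "k \<le> n - 1" for j k
  proof -
    note exchange = support_bases_exchange[OF ex jk(1) less_imp_le[OF jk(2)] jk(3)]
    obtain X0 Y0 where X0: "X0 \<in> ?M j" and Y0: "Y0 \<in> ?M k" using ne jk by fastforce
    show ?thesis
    proof (intro conjI ballI)
      fix X assume X: "X \<in> ?M j"
      show "\<exists>Y\<in>?M k. X \<subseteq> Y"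
        by (rule exists_superset_by_exchange[OF _ X fin[OF X] Y0]) (use exchange in blast)
    next
      fix Y assume Y: "Y \<in> ?M k"
      show "\<exists>X\<in>?M j. X \<subseteq> Y"
        by (rule exists_subset_by_exchange[OF _ fin Y X0]) (use exchange in blast)
    qed
  qed
  moreover have "\<forall>X\<in>?M k. card X = k" for k unfolding support_bases_def by blast
  ultimately show ?thesis
    unfolding support_forms_flag_matroid_iff flag_matroid_def by auto
qed

lemma ereal_add_le_less_cancel:
  fixes x p q y r s :: ereal
  assumes le: "x + p \<le> q + y" and less: "q + r < x + s"
    and finite: "q \<noteq> \<infinity>" "y \<noteq> \<infinity>" "r \<noteq> \<infinity>"
    and not_MInfty: "\<And>z. z \<in> {x, p, q, y, r, s} \<Longrightarrow> z \<noteq> -\<infinity>"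
  shows "p + r < y + s"
proof -
  have "x \<noteq> \<infinity>" "p \<noteq> \<infinity>"
    using ereal_add_le_not_PInfty[OF le] finite by auto
  then obtain x' p' q' y' r' where
    "x = ereal x'" "p = ereal p'" "q = ereal q'" "y = ereal y'" "r = ereal r'"
    using finite not_MInfty by (metis ereal_cases insertCI)
  then show ?thesis using le less not_MInfty by (cases s) auto
qed

lemma ereal_add_le_le_less_cancel:
  fixes a b z z' x' a' w y :: ereal
  assumes h1: "z' + y \<le> x' + b" and h2: "a' + x' \<le> a + z" and h3: "a + b < w + y"
    and finite: "a \<noteq> \<infinity>" "b \<noteq> \<infinity>" "z \<noteq> \<infinity>" "x' \<noteq> \<infinity>"
    and not_MInfty: "\<And>t. t \<in> {a, b, z, z', x', a', w, y} \<Longrightarrow> t \<noteq> -\<infinity>"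
  shows "z' + a' < z + w"
proof -
  have "z' \<noteq> \<infinity>" using ereal_add_le_not_PInfty[OF h1] finite by simp
  have "y + z' \<le> b + x'" "b + a < y + w" using h1 h3 by (simp_all only: add.commute)
  then have "z' + a < x' + w"
    by (rule ereal_add_le_less_cancel[OF _ _ finite(2,4,1)]) (use not_MInfty in auto)
  then have "a + z' < x' + w" by (simp only: add.commute)
  moreover have "x' + a' \<le> a + z" using h2 by (simp only: add.commute)
  ultimately have "a' + z' < z + w"
    by (intro ereal_add_le_less_cancel[OF _ _ finite(1,3) \<open>z' \<noteq> \<infinity>\<close>]) (use not_MInfty in auto)
  then show ?thesis by (simp only: add.commute)
qed

lemma trop_exchange_other_candidate:
  fixes f :: "nat set \<Rightarrow> ereal"
  assumes ex: "trop_exchange f (insert u ((Y - {v, v'}) \<union> Zs)) Y u"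
    and u: "u \<notin> Y" "u \<notin> Zs" and Zs: "Zs \<inter> Y = {}" and vv': "v \<in> Y" "v' \<in> Y" "v \<noteq> v'"
    and less: "f (insert u ((Y - {v, v'}) \<union> Zs)) + f Y <
      f ((Y - {v}) \<union> Zs) + f (insert u (Y - {v'}))"
  shows "f ((Y - {v'}) \<union> Zs) + f (insert u (Y - {v})) \<le> f (insert u ((Y - {v, v'}) \<union> Zs)) + f Y"
proof -
  let ?X = "insert u ((Y - {v, v'}) \<union> Zs)"
  have sets: "Y - ?X = {v, v'}" "insert v (?X - {u}) = (Y - {v'}) \<union> Zs"
    "insert v' (?X - {u}) = (Y - {v}) \<union> Zs"
    using u Zs vv' by auto
  obtain w where w: "w \<in> {v, v'}"
    and le: "f (insert w (?X - {u})) + f (insert u (Y - {w})) \<le> f ?X + f Y"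
    using ex unfolding trop_exchange_def sets(1) by blast
  have "w \<noteq> v'" using le less sets(3) by auto
  with w have "w = v" by blast
  with le show ?thesis unfolding sets(2)[symmetric] by simp
qed

lemma trop_exchange_descent_step:
  fixes f :: "nat set \<Rightarrow> ereal"
  assumes no_MInfty: "\<And>S. f S \<noteq> -\<infinity>"
    and fin: "f X \<noteq> \<infinity>" "f Y \<noteq> \<infinity>" "f ((Y - {v}) \<union> Zs) \<noteq> \<infinity>"
    and u: "u \<notin> Y" and Zs: "Zs \<subseteq> X" "Zs \<inter> Y = {}" "u \<notin> Zs"
    and v: "v \<in> Y - X"
    and ih: "trop_exchange f X ((Y - {v}) \<union> Zs) u"
    and three: "\<And>v'. v' \<in> Y - X \<Longrightarrow> v' \<noteq> v \<Longrightarrow>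
      trop_exchange f (insert u ((Y - {v, v'}) \<union> Zs)) Y u"
    and fails: "\<And>w. w \<in> Y - X \<Longrightarrow>
      f X + f Y < f (insert w (X - {u})) + f (insert u (Y - {w}))"
  obtains v' where "v' \<in> Y - X" "f ((Y - {v'}) \<union> Zs) \<noteq> \<infinity>"
    "f ((Y - {v'}) \<union> Zs) + f (insert v' (X - {u})) < f ((Y - {v}) \<union> Zs) + f (insert v (X - {u}))"
proof -
  let ?Z = "\<lambda>w. (Y - {w}) \<union> Zs" and ?A = "\<lambda>w. insert w (X - {u})"
  obtain v' where v': "v' \<in> Y - X" "v' \<noteq> v"
    and ih': "f (?A v') + f (insert u (?Z v - {v'})) \<le> f X + f (?Z v)"
    using ih Zs(1) unfolding trop_exchange_def by auto
  define X' where "X' = insert u ((Y - {v, v'}) \<union> Zs)"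
  have "insert u (?Z v - {v'}) = X'" using v' Zs unfolding X'_def by auto
  with ih' have ih': "f (?A v') + f X' \<le> f X + f (?Z v)" by simp
  have "f X + f (?Z v) \<noteq> \<infinity>" using fin by simp
  from ereal_add_le_not_PInfty[OF ih' this]
  have fin': "f (?A v') \<noteq> \<infinity>" "f X' \<noteq> \<infinity>" .
  have u_below: "f X' + f Y < f (?Z v) + f (insert u (Y - {v'}))"
    by (rule ereal_add_le_less_cancel[OF ih' fails[OF v'(1)] fin(1) fin(3) fin(2)])
      (auto simp: no_MInfty[symmetric])
  have three_v: "f (?Z v') + f (insert u (Y - {v})) \<le> f X' + f Y"
    unfolding X'_def
    by (rule trop_exchange_other_candidate[OF three[OF v'] u Zs(3) Zs(2)])
      (use v v' u_below[unfolded X'_def] in auto)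
  have "f X' + f Y \<noteq> \<infinity>" using fin fin' by simp
  then have "f (?Z v') \<noteq> \<infinity>" using ereal_add_le_not_PInfty[OF three_v] by blast
  moreover have "f (?Z v') + f (?A v') < f (?Z v) + f (?A v)"
    by (rule ereal_add_le_le_less_cancel[OF three_v ih' fails[OF v] fin(1,2,3) fin'(2)])
      (auto simp: no_MInfty[symmetric])
  ultimately show thesis using that v'(1) by blast
qed

lemma trop_exchange_by_descent:
  fixes f :: "nat set \<Rightarrow> ereal"
  assumes no_MInfty: "\<And>S. f S \<noteq> -\<infinity>"
    and fin: "f X \<noteq> \<infinity>" "f Y \<noteq> \<infinity>" and "finite Y"
    and u: "u \<notin> Y" and Zs: "Zs \<subseteq> X" "Zs \<inter> Y = {}" "u \<notin> Zs"
    and v0: "v0 \<in> Y - X" "f ((Y - {v0}) \<union> Zs) \<noteq> \<infinity>"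
    and ih: "\<And>v. v \<in> Y - X \<Longrightarrow> trop_exchange f X ((Y - {v}) \<union> Zs) u"
    and three: "\<And>v v'. v \<in> Y - X \<Longrightarrow> v' \<in> Y - X \<Longrightarrow> v' \<noteq> v \<Longrightarrow>
      trop_exchange f (insert u ((Y - {v, v'}) \<union> Zs)) Y u"
  shows "trop_exchange f X Y u"
proof (rule ccontr)
  assume "\<not> trop_exchange f X Y u"
  then have fails: "\<And>w. w \<in> Y - X \<Longrightarrow>
      f X + f Y < f (insert w (X - {u})) + f (insert u (Y - {w}))"
    unfolding trop_exchange_def by (auto simp: not_le)
  define \<Phi> where "\<Phi> w = f ((Y - {w}) \<union> Zs) + f (insert w (X - {u}))" for w
  define F where "F = {w \<in> Y - X. f ((Y - {w}) \<union> Zs) \<noteq> \<infinity>}"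
  have step: "\<exists>v'\<in>F. \<Phi> v' < \<Phi> v"
    if "v \<in> Y - X" "f ((Y - {v}) \<union> Zs) \<noteq> \<infinity>" for v
    using trop_exchange_descent_step[OF no_MInfty fin that(2) u Zs that(1) ih[OF that(1)]
        three[OF that(1)] fails]
    unfolding F_def \<Phi>_def by blast
  have "finite F" using \<open>finite Y\<close> unfolding F_def by simp
  moreover have "F \<noteq> {}" using step[OF v0] by blast
  ultimately have "arg_min_on \<Phi> F \<in> F" "\<not> (\<exists>w\<in>F. \<Phi> w < \<Phi> (arg_min_on \<Phi> F))"
    by (rule arg_min_if_finite)+
  then show False using step[of "arg_min_on \<Phi> F"] unfolding F_def by blast
qed

lemma exchange_index_descent:
  assumes ex: "exchange_index n X Y u" and Zs: "Zs \<subseteq> X - Y - {u}" "card Zs \<le> 1"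
    and card: "card X + 1 \<le> card Y + card Zs" and v: "v \<in> Y - X"
  shows "exchange_index n X ((Y - {v}) \<union> Zs) u"
    and "v' \<in> Y - X \<Longrightarrow> v' \<noteq> v \<Longrightarrow>
      exchange_index n (insert u ((Y - {v, v'}) \<union> Zs)) Y u \<and>
      card (Y - insert u ((Y - {v, v'}) \<union> Zs)) = 2"
proof -
  have fin: "finite X" "finite Y"
    using ex unfolding exchange_index_def by (meson finite_atLeastAtMost finite_subset)+
  then have fin_Zs: "finite Zs" using Zs(1) finite_subset by blast
  have disj: "(Y - {v}) \<inter> Zs = {}" "(Y - {v, v'}) \<inter> Zs = {}" using Zs(1) by auto
  have "card ((Y - {v}) \<union> Zs) = card Y - 1 + card Zs"
    using card_Un_disjoint[OF _ fin_Zs disj(1)] fin v by simp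
  then show "exchange_index n X ((Y - {v}) \<union> Zs) u"
    using ex Zs card unfolding exchange_index_def by auto
  assume v': "v' \<in> Y - X" "v' \<noteq> v"
  have u: "u \<in> X" "u \<notin> Y" using ex unfolding exchange_index_def by auto
  have "card (Y - {v, v'}) = card Y - 2"
    using fin v v' by (simp add: card_Diff_subset)
  then have "card ((Y - {v, v'}) \<union> Zs) = card Y - 2 + card Zs"
    using card_Un_disjoint[OF _ fin_Zs disj(2)] fin by simp
  moreover have "u \<notin> (Y - {v, v'}) \<union> Zs" using u Zs by auto
  ultimately have "card (insert u ((Y - {v, v'}) \<union> Zs)) = Suc (card Y - 2 + card Zs)"
    using fin fin_Zs by simp
  moreover have "Y - insert u ((Y - {v, v'}) \<union> Zs) = {v, v'}" using u v v' Zs by auto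
  moreover have "2 \<le> card Y"
    using fin v v' card_mono[of Y "{v, v'}"] by auto
  ultimately show "exchange_index n (insert u ((Y - {v, v'}) \<union> Zs)) Y u \<and>
      card (Y - insert u ((Y - {v, v'}) \<union> Zs)) = 2"
    using ex Zs v v' unfolding exchange_index_def by auto
qed

lemma trop_exchange_if_PInfty:
  fixes f :: "nat set \<Rightarrow> ereal"
  assumes "Y - X \<noteq> {}" "f X = \<infinity> \<or> f Y = \<infinity>"
  shows "trop_exchange f X Y u"
  using assms unfolding trop_exchange_def by auto

lemma trop_exchange_if_card_Diff_eq_1:
  assumes "finite X" "finite Y" "card X \<le> card Y" "u \<in> X - Y" "card (Y - X) = 1"
  shows "trop_exchange f X Y u"
proof -
  obtain v where v: "Y - X = {v}" using assms(5) by (meson card_1_singletonE)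
  have "card (X - Y) \<le> 1" using card_Diff_le_card_Diff[OF assms(1-3)] assms(5) by simp
  then have "X - Y = {u}" using assms(1,4) card_le_Suc0_iff_eq[of "X - Y"] by auto
  then have "insert v (X - {u}) = Y" "insert u (Y - {v}) = X" using v by blast+
  then show ?thesis using v unfolding trop_exchange_def by (simp add: add.commute)
qed

lemma trop_exchange_of_three_term:
  fixes f :: "nat set \<Rightarrow> ereal"
  assumes no_MInfty: "\<And>S. f S \<noteq> -\<infinity>"
    and three: "\<And>X Y u. exchange_index n X Y u \<Longrightarrow> card (Y - X) = 2 \<Longrightarrow> trop_exchange f X Y u"
    and M: "flag_matroid n (support_bases n f)"
  shows "exchange_index n X Y u \<Longrightarrow> trop_exchange f X Y u"
proof (induction "card (Y - X)" arbitrary: Y rule: less_induct)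
  case less
  have sub: "X \<subseteq> {1..n}" "Y \<subseteq> {1..n}"
    and card: "1 \<le> card X" "card X \<le> card Y" "card Y \<le> n - 1" and u: "u \<in> X - Y"
    using less.prems unfolding exchange_index_def by auto
  have fin: "finite X" "finite Y" using sub by (meson finite_atLeastAtMost finite_subset)+
  have "0 < card (X - Y)" using u fin by (auto simp: card_gt_0_iff)
  also have "card (X - Y) \<le> card (Y - X)" using card_Diff_le_card_Diff fin card by blast
  finally have pos: "0 < card (Y - X)" .
  then have "Y - X \<noteq> {}" by (metis card.empty less_irrefl)
  consider "f X = \<infinity> \<or> f Y = \<infinity>" | "card (Y - X) = 1"
    | (descent) "f X \<noteq> \<infinity>" "f Y \<noteq> \<infinity>" "2 \<le> card (Y - X)"
    using pos by force
  then show ?case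
  proof cases
    case descent
    have XY: "X \<in> support_bases n f (card X)" "Y \<in> support_bases n f (card Y)"
      using sub descent unfolding support_bases_def by auto
    obtain Zs v0 m where Zs: "Zs \<subseteq> X - Y - {u}" "card Zs \<le> 1" "card X + 1 \<le> card Y + card Zs"
      and v0: "v0 \<in> Y - X" "(Y - {v0}) \<union> Zs \<in> support_bases n f m"
      by (rule flag_matroid_descent_start[OF M XY card u descent(3)])
    note index = exchange_index_descent[OF less.prems Zs]
    show ?thesis
    proof (rule trop_exchange_by_descent[OF no_MInfty descent(1,2) fin(2)])
      show "u \<notin> Y" "Zs \<subseteq> X" "Zs \<inter> Y = {}" "u \<notin> Zs" using u Zs(1) by auto
      show "v0 \<in> Y - X" "f ((Y - {v0}) \<union> Zs) \<noteq> \<infinity>"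
        using v0 unfolding support_bases_def by auto
    next
      fix v assume v: "v \<in> Y - X"
      have "(Y - {v}) \<union> Zs - X = (Y - X) - {v}" using Zs(1) by auto
      then have "card ((Y - {v}) \<union> Zs - X) < card (Y - X)"
        using v fin card_Diff1_less[of "Y - X" v] by simp
      then show "trop_exchange f X ((Y - {v}) \<union> Zs) u" using less.hyps index(1)[OF v] by blast
    next
      fix v v' assume "v \<in> Y - X" "v' \<in> Y - X" "v' \<noteq> v"
      then show "trop_exchange f (insert u ((Y - {v, v'}) \<union> Zs)) Y u"
        using three index(2) by blast
    qed
  qed (use trop_exchange_if_PInfty trop_exchange_if_card_Diff_eq_1 fin card u \<open>Y - X \<noteq> {}\<close> in auto)
qed

text \<open>Off the coordinates of the tropical projective product a point may take the junk value
  -\<infinity>.  Replacing it by \<infinity> changes no coordinate and makes the descent argument, which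
  needs a function avoiding -\<infinity> everywhere, applicable.\<close>

definition clear_MInfty :: "(nat set \<Rightarrow> ereal) \<Rightarrow> nat set \<Rightarrow> ereal" where
  "clear_MInfty P S = (if P S = -\<infinity> then \<infinity> else P S)"

lemma clear_MInfty_eq:
  assumes "in_TP_product n P" "S \<subseteq> {1..n}" "1 \<le> card S" "card S \<le> n - 1"
  shows "clear_MInfty P S = P S"
  using assms unfolding in_TP_product_def clear_MInfty_def by auto

lemma trop_exchange_cong:
  assumes ex: "exchange_index n X Y u"
    and eq: "\<And>S. S \<subseteq> {1..n} \<Longrightarrow> 1 \<le> card S \<Longrightarrow> card S \<le> n - 1 \<Longrightarrow> f S = g S"
  shows "trop_exchange f X Y u \<longleftrightarrow> trop_exchange g X Y u"
proof -
  have sub: "X \<subseteq> {1..n}" "Y \<subseteq> {1..n}"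
    and card: "1 \<le> card X" "card X \<le> card Y" "card Y \<le> n - 1" and u: "u \<in> X" "u \<notin> Y"
    using ex unfolding exchange_index_def by auto
  have fin: "finite X" "finite Y" using sub by (meson finite_atLeastAtMost finite_subset)+
  have "f (insert v (X - {u})) = g (insert v (X - {u}))"
    "f (insert u (Y - {v})) = g (insert u (Y - {v}))" if v: "v \<in> Y - X" for v
  proof -
    have "card (insert v (X - {u})) = card X" "card (insert u (Y - {v})) = card Y"
      using card_insert_Diff_swap[of X u v] card_insert_Diff_swap[of Y v u] v u fin by auto
    moreover have "insert v (X - {u}) \<subseteq> {1..n}" "insert u (Y - {v}) \<subseteq> {1..n}"
      using sub u v by auto
    ultimately show "f (insert v (X - {u})) = g (insert v (X - {u}))"
      "f (insert u (Y - {v})) = g (insert u (Y - {v}))"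
      using eq[of "insert v (X - {u})"] eq[of "insert u (Y - {v})"] card by auto
  qed
  moreover have "f X = g X" "f Y = g Y" using eq sub card by auto
  ultimately show ?thesis unfolding trop_exchange_def by auto
qed

lemma flag_matroid_cong:
  assumes "\<And>k. 1 \<le> k \<Longrightarrow> k \<le> n - 1 \<Longrightarrow> M k = M' k"
  shows "flag_matroid n M \<longleftrightarrow> flag_matroid n M'"
  unfolding flag_matroid_def
  by (intro conj_cong ball_cong all_cong imp_cong refl) (auto simp: assms)

lemma support_bases_cong:
  assumes "\<And>S. S \<subseteq> {1..n} \<Longrightarrow> 1 \<le> card S \<Longrightarrow> card S \<le> n - 1 \<Longrightarrow> f S = g S"
    and "1 \<le> k" "k \<le> n - 1"
  shows "support_bases n f k = support_bases n g k"
  using assms unfolding support_bases_def by auto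

lemma trop_exchange_if_mem_FlDr_3M:
  assumes tp: "in_TP_product n P"
    and three: "\<And>X Y u. exchange_index n X Y u \<Longrightarrow> card (Y - X) = 2 \<Longrightarrow> trop_exchange P X Y u"
    and flag: "support_forms_flag_matroid n P"
    and ex: "exchange_index n X Y u"
  shows "trop_exchange P X Y u"
proof -
  let ?Q = "clear_MInfty P"
  note Q_eq = clear_MInfty_eq[OF tp]
  have "trop_exchange ?Q X Y u"
  proof (rule trop_exchange_of_three_term[OF _ _ _ ex])
    show "?Q S \<noteq> -\<infinity>" for S unfolding clear_MInfty_def by simp
    show "trop_exchange ?Q X Y u" if "exchange_index n X Y u" "card (Y - X) = 2" for X Y u
      using trop_exchange_cong[of n X Y u ?Q P, OF that(1) Q_eq] three[OF that] by blast
    have "support_bases n ?Q k = support_bases n P k" if "1 \<le> k" "k \<le> n - 1" for k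
      using support_bases_cong[of n ?Q P, OF Q_eq that] .
    then show "flag_matroid n (support_bases n ?Q)"
      using flag flag_matroid_cong[of n "support_bases n ?Q" "support_bases n P"]
      unfolding support_forms_flag_matroid_iff by blast
  qed
  then show ?thesis using trop_exchange_cong[of n X Y u ?Q P, OF ex Q_eq] by blast
qed

lemma mem_FlDr_iff:
  "P \<in> FlDr n \<longleftrightarrow>
    in_TP_product n P \<and> (\<forall>X Y u. exchange_index n X Y u \<longrightarrow> trop_exchange P X Y u)"
  using trop_solves_ip_all_iff_trop_exchange_all[of n UNIV P] unfolding FlDr_def by auto

lemma mem_FlDr_3M_iff:
  "P \<in> FlDr_3M n \<longleftrightarrow> in_TP_product n P \<and>
    (\<forall>X Y u. exchange_index n X Y u \<and> card (Y - X) = 2 \<longrightarrow> trop_exchange P X Y u) \<and>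
    support_forms_flag_matroid n P"
  using trop_solves_ip_all_iff_trop_exchange_all[of n "{3}" P] unfolding FlDr_3M_def by auto

text \<open>The argument does not need n \<ge> 2.\<close>

theorem theorem4:
  fixes n :: nat
  assumes "n \<ge> 2"
  shows "FlDr_3M n = FlDr n"
  unfolding set_eq_iff mem_FlDr_iff mem_FlDr_3M_iff
  using trop_exchange_if_mem_FlDr_3M support_forms_flag_matroid_of_trop_exchange by blast

end
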